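(* The generating function $$F_{(213,312)}(x,p,q,u,v,s,t)=\sum_{n\ge0}\ \sum_{\pi\in S_n(213,312)} x^n p^{\operatorname{asc}(\pi)}q^{\operatorname{des}(\pi)}u^{\operatorname{lrmax}(\pi)}v^{\operatorname{rlmax}(\pi)}s^{\operatorname{lrmin}(\pi)}t^{\operatorname{rlmin}(\pi)}$$ is equal to $$1 + xuvst + \frac{p q s t^2 u^2 v^2 x^3}{(-1 + p t u x) (-1 + p u x + q v x)} + \frac{q s^2 t u v^2 x^2}{1 - q s v x} + \frac{p s t^2 u^2 v x^2}{1 - p t u x} + \frac{p q s^2 t u^2 v^2 x^3}{(-1 + p u x + q v x) (-1 + q s v x)}.$$
   Context: For $n\ge 0$, $S_n$ denotes the set of permutations $\pi=\pi_1\cdots\pi_n$ of $[n]=\{1,\dots,n\}$ ($S_0$ consists of the empty permutation, for which all statistics are $0$). $\pi$ avoids a pattern $\tau\in S_k$ if no subsequence $\pi_{i_1}\cdots\pi_{i_k}$ ($i_1<\dots<i_k$) satisfies $\pi_{i_a}<\pi_{i_b}\iff\tau_a<\tau_b$; $S_n(\tau,\rho)$ is the set of permutations in $S_n$ avoiding both $\tau$ and $\rho$. $\operatorname{asc}(\pi)$ (resp. $\operatorname{des}(\pi)$) is the number of $i\in[n-1]$ with $\pi_i<\pi_{i+1}$ (resp. $\pi_i>\pi_{i+1}$). $\pi_i$ is a left-to-right maximum (resp. minimum) if it is larger (resp. smaller) than every $\pi_j$ with $j<i$, and a right-to-left maximum (resp. minimum) if it is larger (resp. smaller) than every $\pi_j$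 with $j>i$; $\operatorname{lrmax},\operatorname{lrmin},\operatorname{rlmax},\operatorname{rlmin}$ count these. *)

theory Defs
  imports "HOL-Combinatorics.Multiset_Permutations" "HOL-Computational_Algebra.Formal_Power_Series"
begin

text \<open>Permutations of [n] are lists w = [pi_1,...,pi_n] (0-indexed positions).\<close>

definition perms :: "nat \<Rightarrow> nat list set" where
  "perms n = permutations_of_set {1..n}"

definition contains_pattern :: "nat list \<Rightarrow> nat list \<Rightarrow> bool" where
  "contains_pattern tau w \<longleftrightarrow>
     (\<exists>is. length is = length tau \<and> sorted_wrt (<) is \<and> (\<forall>j\<in>set is. j < length w) \<and>
        (\<forall>a<length tau. \<forall>b<length tau. w ! (is ! a) < w ! (is ! b) \<longleftrightarrow> tau ! a < tau ! b))"

definition avoids :: "nat list \<Rightarrow> nat list \<Rightarrow> bool" where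
  "avoids w tau \<longleftrightarrow> \<not> contains_pattern tau w"

definition av2 :: "nat \<Rightarrow> nat list \<Rightarrow> nat list \<Rightarrow> nat list set" where
  "av2 n tau rho = {w \<in> perms n. avoids w tau \<and> avoids w rho}"

definition asc :: "nat list \<Rightarrow> nat" where
  "asc w = card {i. i + 1 < length w \<and> w ! i < w ! (i + 1)}"

definition des :: "nat list \<Rightarrow> nat" where
  "des w = card {i. i + 1 < length w \<and> w ! i > w ! (i + 1)}"

definition lrmax :: "nat list \<Rightarrow> nat" where
  "lrmax w = card {i. i < length w \<and> (\<forall>j<i. w ! j < w ! i)}"

definition lrmin :: "nat list \<Rightarrow> nat" where
  "lrmin w = card {i. i < length w \<and> (\<forall>j<i. w ! j > w ! i)}"

definition rlmax :: "nat list \<Rightarrow> nat" where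
  "rlmax w = card {i. i < length w \<and> (\<forall>j. i < j \<and> j < length w \<longrightarrow> w ! j < w ! i)}"

definition rlmin :: "nat list \<Rightarrow> nat" where
  "rlmin w = card {i. i < length w \<and> (\<forall>j. i < j \<and> j < length w \<longrightarrow> w ! j > w ! i)}"

text \<open>Generating function as a formal power series in x, with the remaining
  variables specialised to arbitrary elements of a field.\<close>

definition genfun :: "nat list \<Rightarrow> nat list \<Rightarrow> 'a::field \<Rightarrow> 'a \<Rightarrow> 'a \<Rightarrow> 'a \<Rightarrow> 'a \<Rightarrow> 'a \<Rightarrow> 'a fps" where
  "genfun tau rho p q u v s t = Abs_fps (\<lambda>n. \<Sum>w\<in>av2 n tau rho.
      p ^ asc w * q ^ des w * u ^ lrmax w * v ^ rlmax w * s ^ lrmin w * t ^ rlmin w)"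

end

theory Submission
  imports Defs
begin

(* A permutation contains 213 or 312 exactly when it has a valley, an entry with a larger entry
  on each side. So if it avoids both patterns, its entry 1 is first or last, and deleting it
  leaves a permutation avoiding both patterns again: for n >= 1 these permutations of [n+1] are
  1 (sigma+1) and (sigma+1) 1 with sigma one of [n]. Prepending 1 adds an ascent, a left-to-right
  maximum and a right-to-left minimum and leaves 1 as the only left-to-right minimum; appending 1
  is the mirror image. Hence the generating function satisfies
    F(s,t) = 1 + x (uvst + pust (F(1,t) - 1) + qvst (F(s,1) - 1)),
  a triangular linear system for F(1,1), F(1,t), F(s,1) whose solution gives the formula. *)

section \<open>Valleys\<close>

definition has_valley :: "nat list \<Rightarrow> bool" where
  "has_valley w \<longleftrightarrow> (\<exists>i j k. i < j \<and> j < k \<and> k < length w \<and> w ! j < w ! i \<and> w ! j < w ! k)"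

lemma contains_213_or_312_iff_has_valley:
  assumes "distinct w"
  shows "contains_pattern [2,1,3] w \<or> contains_pattern [3,1,2] w \<longleftrightarrow> has_valley w"
proof
  assume "contains_pattern [2,1,3] w \<or> contains_pattern [3,1,2] w"
  then obtain tau where tau: "tau = [2,1,3] \<or> tau = [3,1,2]" and "contains_pattern tau w"
    by blast
  then obtain "is" where len: "length is = length tau" and sorted: "sorted_wrt (<) is"
    and bound: "\<forall>j\<in>set is. j < length w"
    and order: "\<forall>a<length tau. \<forall>b<length tau. w ! (is ! a) < w ! (is ! b) \<longleftrightarrow> tau ! a < tau ! b"
    unfolding contains_pattern_def by blast
  have "length is = 3" using len tau by auto
  then have "is ! 0 < is ! 1" "is ! 1 < is ! 2" "is ! 2 < length w"
    using sorted bound by (auto simp: sorted_wrt_iff_nth_less)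
  moreover have "w ! (is ! 1) < w ! (is ! 0)" "w ! (is ! 1) < w ! (is ! 2)"
    using order[rule_format, of 1 0] order[rule_format, of 1 2] tau by auto
  ultimately show "has_valley w" unfolding has_valley_def by blast
next
  assume "has_valley w"
  then obtain i j k where ijk: "i < j" "j < k" "k < length w" "w ! j < w ! i" "w ! j < w ! k"
    unfolding has_valley_def by blast
  have pattern_order: "\<forall>a<3. \<forall>b<3. w ! ([i,j,k] ! a) < w ! ([i,j,k] ! b) \<longleftrightarrow> tau ! a < tau ! b"
    if "w ! i < w ! k \<and> tau = [2,1,3] \<or> w ! k < w ! i \<and> tau = [3,1,2]" for tau :: "nat list"
  proof (intro allI impI)
    fix a b :: nat assume "a < 3" "b < 3"
    then have "a \<in> {0,1,2}" "b \<in> {0,1,2}" by auto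
    then show "w ! ([i,j,k] ! a) < w ! ([i,j,k] ! b) \<longleftrightarrow> tau ! a < tau ! b"
      using that ijk by auto
  qed
  have "w ! i \<noteq> w ! k" using assms ijk by (simp add: nth_eq_iff_index_eq)
  then obtain tau :: "nat list"
    where tau: "w ! i < w ! k \<and> tau = [2,1,3] \<or> w ! k < w ! i \<and> tau = [3,1,2]"
    by (cases "w ! i < w ! k") auto
  then have len: "length tau = 3" by auto
  have "contains_pattern tau w"
    unfolding contains_pattern_def
  proof (intro exI[of _ "[i,j,k]"] conjI)
    show "\<forall>a<length tau. \<forall>b<length tau. w ! ([i,j,k] ! a) < w ! ([i,j,k] ! b) \<longleftrightarrow> tau ! a < tau ! b"
      using pattern_order[OF tau] len by simp
  qed (use ijk len in auto)
  then show "contains_pattern [2,1,3] w \<or> contains_pattern [3,1,2] w" using tau by blast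
qed

lemma has_valley_map_strict_mono:
  assumes "strict_mono f"
  shows "has_valley (map f w) \<longleftrightarrow> has_valley w"
  unfolding has_valley_def length_map using assms
  by (intro ex_cong1 conj_cong refl) (auto simp: strict_mono_less)

lemma has_valley_revI:
  assumes "has_valley w"
  shows "has_valley (rev w)"
proof -
  obtain i j k where ijk: "i < j" "j < k" "k < length w" "w ! j < w ! i" "w ! j < w ! k"
    using assms unfolding has_valley_def by blast
  let ?r = "\<lambda>i. length w - Suc i"
  have "?r k < ?r j" "?r j < ?r i" "?r i < length w" using ijk by auto
  moreover have "rev w ! ?r j < rev w ! ?r k" "rev w ! ?r j < rev w ! ?r i"
    using ijk by (simp_all add: rev_nth)
  ultimately show "has_valley (rev w)" unfolding has_valley_def by (metis length_rev)
qed

lemma has_valley_rev [simp]: "has_valley (rev w) \<longleftrightarrow> has_valley w"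
  using has_valley_revI by fastforce

lemma has_valley_Cons_min:
  assumes "\<forall>x\<in>set w. m < x"
  shows "has_valley (m # w) \<longleftrightarrow> has_valley w"
proof
  assume "has_valley (m # w)"
  then obtain i j k where ijk: "i < j" "j < k" "k < Suc (length w)"
    "(m # w) ! j < (m # w) ! i" "(m # w) ! j < (m # w) ! k"
    unfolding has_valley_def by auto
  obtain j' k' where jk: "j = Suc j'" "k = Suc k'"
    using ijk(1,2) by (metis gr0_implies_Suc le_less_trans zero_le)
  have "m < (m # w) ! j" using assms jk ijk(2,3) by simp
  then obtain i' where "i = Suc i'" using ijk(4) by (cases i) auto
  then show "has_valley w" unfolding has_valley_def using ijk jk
    by (intro exI[of _ i'] exI[of _ j'] exI[of _ k']) simp
next
  assume "has_valley w"
  then obtain i j k where ijk: "i < j" "j < k" "k < length w" "w ! j < w ! i" "w ! j < w ! k"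
    unfolding has_valley_def by blast
  then show "has_valley (m # w)" unfolding has_valley_def
    by (intro exI[of _ "Suc i"] exI[of _ "Suc j"] exI[of _ "Suc k"]) simp
qed

lemma has_valley_snoc_min:
  "\<forall>x\<in>set w. m < x \<Longrightarrow> has_valley (w @ [m]) \<longleftrightarrow> has_valley w"
  using has_valley_Cons_min[of "rev w" m] has_valley_rev[of "m # rev w"] by simp

lemma hd_or_last_eq_Min_if_not_has_valley:
  assumes "\<not> has_valley w" "distinct w" "w \<noteq> []"
  shows "hd w = Min (set w) \<or> last w = Min (set w)"
proof -
  obtain j where j: "j < length w" "w ! j = Min (set w)"
    using assms(3) by (metis Min_in finite_set in_set_conv_nth set_empty)
  have min: "w ! j < w ! i" if "i < length w" "i \<noteq> j" for i
    using that j assms(2) by (metis Min_le finite_set nat_less_le nth_eq_iff_index_eq nth_mem)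
  have "j = 0 \<or> j = length w - 1"
  proof (rule ccontr)
    assume "\<not> (j = 0 \<or> j = length w - 1)"
    then have "0 < j" "j < length w - 1" "length w - 1 < length w" using j(1) by auto
    moreover have "w ! j < w ! 0" "w ! j < w ! (length w - 1)"
      using min[of 0] min[of "length w - 1"] calculation assms(3) by auto
    ultimately have "has_valley w" unfolding has_valley_def by blast
    then show False using assms(1) by contradiction
  qed
  then show ?thesis using j assms(3) by (auto simp: hd_conv_nth last_conv_nth)
qed

section \<open>Valley-free permutations\<close>

lemma mem_perms_iff: "w \<in> perms n \<longleftrightarrow> set w = {1..n} \<and> distinct w"
  by (simp add: perms_def permutations_of_set_def)

lemma Cons_one_map_Suc_mem_perms: "1 # map Suc s \<in> perms (Suc n) \<longleftrightarrow> s \<in> perms n"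
proof -
  have interval: "{1..Suc n} = insert 1 (Suc ` {1..n})"
    by (simp add: image_Suc_atLeastAtMost atLeastAtMost_insertL)
  have set_eq: "insert 1 (Suc ` set s) = insert 1 (Suc ` {1..n}) \<longleftrightarrow> set s = {1..n}" if "0 \<notin> set s"
  proof -
    have "1 \<notin> Suc ` set s" "1 \<notin> Suc ` {1..n}" using that by auto
    then have "insert 1 (Suc ` set s) = insert 1 (Suc ` {1..n}) \<longleftrightarrow> Suc ` set s = Suc ` {1..n}"
      by (rule insert_ident)
    also have "\<dots> \<longleftrightarrow> set s = {1..n}" by (rule inj_image_eq_iff[OF inj_Suc])
    finally show ?thesis .
  qed
  show ?thesis
    unfolding mem_perms_iff interval using set_eq by (auto simp: distinct_map)
qed

lemma snoc_mem_perms_iff_Cons: "xs @ [x] \<in> perms n \<longleftrightarrow> x # xs \<in> perms n"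
  by (auto simp: mem_perms_iff)

definition valley_free_perms :: "nat \<Rightarrow> nat list set" where
  "valley_free_perms n = {w \<in> perms n. \<not> has_valley w}"

lemma av2_213_312_eq_valley_free_perms: "av2 n [2,1,3] [3,1,2] = valley_free_perms n"
  unfolding av2_def valley_free_perms_def avoids_def
  using contains_213_or_312_iff_has_valley by (auto simp: mem_perms_iff)

lemma perms_pos: "w \<in> perms n \<Longrightarrow> \<forall>x\<in>set w. 0 < x"
  by (auto simp: mem_perms_iff)

lemma
  shows Cons_one_map_Suc_mem_valley_free_perms:
    "1 # map Suc s \<in> valley_free_perms (Suc n) \<longleftrightarrow> s \<in> valley_free_perms n"
    and map_Suc_snoc_one_mem_valley_free_perms:
    "map Suc s @ [1] \<in> valley_free_perms (Suc n) \<longleftrightarrow> s \<in> valley_free_perms n"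
proof -
  have "has_valley (1 # map Suc s) \<longleftrightarrow> has_valley s" "has_valley (map Suc s @ [1]) \<longleftrightarrow> has_valley s"
    if "\<forall>x\<in>set s. 0 < x"
    using that has_valley_Cons_min[of "map Suc s" 1] has_valley_snoc_min[of "map Suc s" 1]
    by (simp_all add: has_valley_map_strict_mono strict_mono_Suc_iff)
  then show "1 # map Suc s \<in> valley_free_perms (Suc n) \<longleftrightarrow> s \<in> valley_free_perms n"
    "map Suc s @ [1] \<in> valley_free_perms (Suc n) \<longleftrightarrow> s \<in> valley_free_perms n"
    unfolding valley_free_perms_def
    using Cons_one_map_Suc_mem_perms snoc_mem_perms_iff_Cons perms_pos by blast+
qed

lemma ex_map_Suc_if_0_notin_set: "0 \<notin> set r \<Longrightarrow> \<exists>s. r = map Suc s"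
  unfolding ex_map_conv by (metis not0_implies_Suc)

lemma valley_free_perms_Suc:
  "valley_free_perms (Suc n) =
    (\<lambda>s. 1 # map Suc s) ` valley_free_perms n \<union> (\<lambda>s. map Suc s @ [1]) ` valley_free_perms n"
    (is "_ = ?front \<union> ?back")
proof
  show "?front \<union> ?back \<subseteq> valley_free_perms (Suc n)"
    using Cons_one_map_Suc_mem_valley_free_perms map_Suc_snoc_one_mem_valley_free_perms by blast
next
  show "valley_free_perms (Suc n) \<subseteq> ?front \<union> ?back"
  proof
    fix w assume w: "w \<in> valley_free_perms (Suc n)"
    then have "set w = {1..Suc n}" and "distinct w" "\<not> has_valley w"
      by (simp_all add: valley_free_perms_def mem_perms_iff)
    then have "w \<noteq> []" "0 \<notin> set w" "Min (set w) = 1" by (auto intro: Min_eqI)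
    then have "hd w = 1 \<or> last w = 1"
      using hd_or_last_eq_Min_if_not_has_valley \<open>distinct w\<close> \<open>\<not> has_valley w\<close> by metis
    then show "w \<in> ?front \<union> ?back"
    proof
      assume "hd w = 1"
      then have "w = 1 # tl w" using \<open>w \<noteq> []\<close> by (metis list.collapse)
      moreover obtain s where "tl w = map Suc s"
        using ex_map_Suc_if_0_notin_set \<open>0 \<notin> set w\<close> by (metis list.set_sel(2) \<open>w \<noteq> []\<close>)
      ultimately show ?thesis using w Cons_one_map_Suc_mem_valley_free_perms by (metis UnI1 image_eqI)
    next
      assume "last w = 1"
      then have "w = butlast w @ [1]" using \<open>w \<noteq> []\<close> by (metis append_butlast_last_id)
      moreover obtain s where "butlast w = map Suc s"
        using ex_map_Suc_if_0_notin_set \<open>0 \<notin> set w\<close> by (metis in_set_butlastD)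
      ultimately show ?thesis using w map_Suc_snoc_one_mem_valley_free_perms by (metis UnI2 image_eqI)
    qed
  qed
qed

lemma finite_valley_free_perms: "finite (valley_free_perms n)"
  by (rule finite_subset[of _ "perms n"]) (auto simp: valley_free_perms_def perms_def)

lemma valley_free_perms_0: "valley_free_perms 0 = {[]}"
  by (auto simp: valley_free_perms_def mem_perms_iff has_valley_def)

lemma valley_free_perms_1: "valley_free_perms 1 = {[1]}"
  using valley_free_perms_Suc[of 0] by (simp add: valley_free_perms_0)

section \<open>Statistics under reversal and under insertion of a new minimum\<close>

lemma card_less_reflect:
  "card {i. i < n \<and> P (n - Suc i)} = card {i. i < n \<and> P i}"
proof -
  have "{i. i < n \<and> P (n - Suc i)} = (\<lambda>i. n - Suc i) ` {i. i < n \<and> P i}"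
    by (auto simp: image_iff intro!: exI[where x = "n - Suc _"])
  moreover have "inj_on (\<lambda>i. n - Suc i) {i. i < n \<and> P i}"
    by (auto simp: inj_on_def)
  ultimately show ?thesis by (simp add: card_image)
qed

lemma asc_rev [simp]: "asc (rev w) = des w"
proof -
  let ?n = "length w - 1"
  have "asc (rev w) = card {i. i < ?n \<and> w ! (?n - Suc i) > w ! (?n - Suc i + 1)}"
    unfolding asc_def by (intro arg_cong[where f = card]) (auto simp: rev_nth Suc_diff_Suc)
  also have "\<dots> = des w"
    unfolding des_def card_less_reflect[of ?n "\<lambda>j. w ! j > w ! (j + 1)"] by (metis less_diff_conv)
  finally show ?thesis .
qed

lemma des_rev [simp]: "des (rev w) = asc w"
  by (metis asc_rev rev_rev_ident)

lemma all_before_rev: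
  assumes "i < length w"
  shows "(\<forall>j<i. R (rev w ! j) (rev w ! i)) \<longleftrightarrow>
    (\<forall>j. length w - Suc i < j \<and> j < length w \<longrightarrow> R (w ! j) (w ! (length w - Suc i)))"
    (is "?lhs \<longleftrightarrow> ?rhs")
proof
  assume ?lhs
  show ?rhs
  proof (intro allI impI)
    fix j assume "length w - Suc i < j \<and> j < length w"
    then have "length w - Suc j < i" and "length w - Suc (length w - Suc j) = j"
      using assms by linarith+
    then show "R (w ! j) (w ! (length w - Suc i))" using \<open>?lhs\<close> assms by (metis less_trans rev_nth)
  qed
next
  assume ?rhs
  show ?lhs
  proof (intro allI impI)
    fix j assume "j < i"
    then have "length w - Suc i < length w - Suc j" and "length w - Suc j < length w"
      using assms by linarith+
    then show "R (rev w ! j) (rev w ! i)" using \<open>?rhs\<close> \<open>j < i\<close> assms by (simp add: rev_nth)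
  qed
qed

lemma lrmax_rev [simp]: "lrmax (rev w) = rlmax w"
proof -
  let ?n = "length w"
  have "lrmax (rev w) =
      card {i. i < ?n \<and> (\<forall>j. ?n - Suc i < j \<and> j < ?n \<longrightarrow> w ! j < w ! (?n - Suc i))}"
    unfolding lrmax_def length_rev
    by (intro arg_cong[where f = card] Collect_cong conj_cong refl) (simp add: all_before_rev)
  then show ?thesis
    using card_less_reflect[of ?n "\<lambda>k. \<forall>j. k < j \<and> j < ?n \<longrightarrow> w ! j < w ! k"]
    by (simp add: rlmax_def)
qed

lemma rlmax_rev [simp]: "rlmax (rev w) = lrmax w"
  by (metis lrmax_rev rev_rev_ident)

lemma lrmin_rev [simp]: "lrmin (rev w) = rlmin w"
proof -
  let ?n = "length w"
  have "lrmin (rev w) =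
      card {i. i < ?n \<and> (\<forall>j. ?n - Suc i < j \<and> j < ?n \<longrightarrow> w ! j > w ! (?n - Suc i))}"
    unfolding lrmin_def length_rev
    by (intro arg_cong[where f = card] Collect_cong conj_cong refl)
      (simp add: all_before_rev[where R = "\<lambda>a b. b < a"])
  then show ?thesis
    using card_less_reflect[of ?n "\<lambda>k. \<forall>j. k < j \<and> j < ?n \<longrightarrow> w ! j > w ! k"]
    by (simp add: rlmin_def)
qed

lemma rlmin_rev [simp]: "rlmin (rev w) = lrmin w"
  by (metis lrmin_rev rev_rev_ident)

lemma card_less_Suc_eq_of_bool:
  "card {i. i < Suc n \<and> P i} = of_bool (P 0) + card {i. i < n \<and> P (Suc i)}"
proof -
  have "{i. i < Suc n \<and> P i} = {i. i = 0 \<and> P 0} \<union> Suc ` {i. i < n \<and> P (Suc i)}"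
    by (auto simp: image_iff less_Suc_eq_0_disj)
  then show ?thesis by (simp add: card_Un_disjoint card_image)
qed

lemma all_between_Suc:
  "(\<forall>j. Suc i < j \<and> j < Suc n \<longrightarrow> P j) \<longleftrightarrow> (\<forall>j. i < j \<and> j < n \<longrightarrow> P (Suc j))"
  "(\<forall>j. 0 < j \<and> j < Suc n \<longrightarrow> P j) \<longleftrightarrow> (\<forall>j<n. P (Suc j))"
  by (metis Suc_less_eq less_Suc_eq_0_disj not_less_zero)+

lemma
  assumes "\<forall>x\<in>set w. m < x"
  shows asc_Cons_min: "w \<noteq> [] \<Longrightarrow> asc (m # w) = Suc (asc w)"
    and des_Cons_min: "des (m # w) = des w"
    and lrmax_Cons_min: "lrmax (m # w) = Suc (lrmax w)"
    and rlmax_Cons_min: "w \<noteq> [] \<Longrightarrow> rlmax (m # w) = rlmax w"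
    and lrmin_Cons_min: "lrmin (m # w) = 1"
    and rlmin_Cons_min: "rlmin (m # w) = Suc (rlmin w)"
proof -
  have below: "i < length w \<Longrightarrow> m < w ! i" for i
    using assms by simp
  show "w \<noteq> [] \<Longrightarrow> asc (m # w) = Suc (asc w)"
    using assms by (cases w) (simp_all add: asc_def card_less_Suc_eq_of_bool)
  show "des (m # w) = des w"
    using assms by (cases w) (simp_all add: des_def card_less_Suc_eq_of_bool)
  show "lrmax (m # w) = Suc (lrmax w)"
    using below by (simp add: lrmax_def card_less_Suc_eq_of_bool All_less_Suc2 cong: conj_cong)
  show "w \<noteq> [] \<Longrightarrow> rlmax (m # w) = rlmax w"
    by (simp add: rlmax_def card_less_Suc_eq_of_bool all_between_Suc)
      (metis below length_greater_0_conv less_asym)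
  show "lrmin (m # w) = 1"
    by (simp add: lrmin_def card_less_Suc_eq_of_bool All_less_Suc2) (use below less_asym in blast)
  show "rlmin (m # w) = Suc (rlmin w)"
    using below by (simp add: rlmin_def card_less_Suc_eq_of_bool all_between_Suc)
qed

lemma
  assumes "\<forall>x\<in>set w. m < x"
  shows asc_snoc_min: "asc (w @ [m]) = asc w"
    and des_snoc_min: "w \<noteq> [] \<Longrightarrow> des (w @ [m]) = Suc (des w)"
    and lrmax_snoc_min: "w \<noteq> [] \<Longrightarrow> lrmax (w @ [m]) = lrmax w"
    and rlmax_snoc_min: "rlmax (w @ [m]) = Suc (rlmax w)"
    and lrmin_snoc_min: "lrmin (w @ [m]) = Suc (lrmin w)"
    and rlmin_snoc_min: "rlmin (w @ [m]) = 1"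
proof -
  have rev_below: "\<forall>x\<in>set (rev w). m < x" and snoc: "w @ [m] = rev (m # rev w)"
    using assms by simp_all
  show "asc (w @ [m]) = asc w" "w \<noteq> [] \<Longrightarrow> des (w @ [m]) = Suc (des w)"
    "w \<noteq> [] \<Longrightarrow> lrmax (w @ [m]) = lrmax w" "rlmax (w @ [m]) = Suc (rlmax w)"
    "lrmin (w @ [m]) = Suc (lrmin w)" "rlmin (w @ [m]) = 1"
    unfolding snoc asc_rev des_rev lrmax_rev rlmax_rev lrmin_rev rlmin_rev using rev_below
    by (simp_all add: asc_Cons_min des_Cons_min lrmax_Cons_min rlmax_Cons_min lrmin_Cons_min
      rlmin_Cons_min)
qed

lemma
  assumes "strict_mono f"
  shows asc_map_strict_mono: "asc (map f w) = asc w"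
    and des_map_strict_mono: "des (map f w) = des w"
    and lrmax_map_strict_mono: "lrmax (map f w) = lrmax w"
    and rlmax_map_strict_mono: "rlmax (map f w) = rlmax w"
    and lrmin_map_strict_mono: "lrmin (map f w) = lrmin w"
    and rlmin_map_strict_mono: "rlmin (map f w) = rlmin w"
  using assms by (simp_all add: asc_def des_def lrmax_def rlmax_def lrmin_def rlmin_def strict_mono_less
    cong: conj_cong)

section \<open>The generating function\<close>

definition stat_weight :: "'a::field \<Rightarrow> 'a \<Rightarrow> 'a \<Rightarrow> 'a \<Rightarrow> 'a \<Rightarrow> 'a \<Rightarrow> nat list \<Rightarrow> 'a" where
  "stat_weight p q u v s t w =
    p ^ asc w * q ^ des w * u ^ lrmax w * v ^ rlmax w * s ^ lrmin w * t ^ rlmin w"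

lemma stat_weight_Nil: "stat_weight p q u v s t [] = 1"
  by (simp add: stat_weight_def asc_def des_def lrmax_def rlmax_def lrmin_def rlmin_def)

lemma stat_weight_one: "stat_weight p q u v s t [1] = u * v * s * t"
  by (simp add: stat_weight_def asc_def des_def lrmax_def rlmax_def lrmin_def rlmin_def
    card_less_Suc_eq_of_bool del: less_Suc0)

lemma
  assumes "w \<noteq> []" "\<forall>x\<in>set w. 0 < x"
  shows stat_weight_Cons_one_map_Suc:
      "stat_weight p q u v s t (1 # map Suc w) = p * u * s * t * stat_weight p q u v 1 t w"
    and stat_weight_map_Suc_snoc_one:
      "stat_weight p q u v s t (map Suc w @ [1]) = q * v * s * t * stat_weight p q u v s 1 w"
proof -
  have below: "\<forall>x\<in>set (map Suc w). 1 < x" and nonempty: "map Suc w \<noteq> []"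
    using assms by auto
  have "strict_mono Suc" by (simp add: strict_mono_Suc_iff)
  note shift = asc_map_strict_mono des_map_strict_mono lrmax_map_strict_mono
    rlmax_map_strict_mono lrmin_map_strict_mono rlmin_map_strict_mono
  show "stat_weight p q u v s t (1 # map Suc w) = p * u * s * t * stat_weight p q u v 1 t w"
    using asc_Cons_min[OF below nonempty] des_Cons_min[OF below] lrmax_Cons_min[OF below]
      rlmax_Cons_min[OF below nonempty] lrmin_Cons_min[OF below] rlmin_Cons_min[OF below]
    by (simp add: stat_weight_def shift[OF \<open>strict_mono Suc\<close>] algebra_simps)
  show "stat_weight p q u v s t (map Suc w @ [1]) = q * v * s * t * stat_weight p q u v s 1 w"
    using asc_snoc_min[OF below] des_snoc_min[OF below nonempty] lrmax_snoc_min[OF below nonempty]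
      rlmax_snoc_min[OF below] lrmin_snoc_min[OF below] rlmin_snoc_min[OF below]
    by (simp add: stat_weight_def shift[OF \<open>strict_mono Suc\<close>] algebra_simps)
qed

(* For n = 0 both insertions give [1], which the sum would count twice. *)
lemma stat_weight_sum_valley_free_perms_Suc:
  assumes "0 < n"
  shows "(\<Sum>w\<in>valley_free_perms (Suc n). stat_weight p q u v s t w) =
    p * u * s * t * (\<Sum>w\<in>valley_free_perms n. stat_weight p q u v 1 t w) +
    q * v * s * t * (\<Sum>w\<in>valley_free_perms n. stat_weight p q u v s 1 w)"
proof -
  let ?front = "\<lambda>w. 1 # map Suc w" and ?back = "\<lambda>w. map Suc w @ [1]"
  have elems: "w \<noteq> []" "\<forall>x\<in>set w. 0 < x" if "w \<in> valley_free_perms n" for w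
    using that assms by (auto simp: valley_free_perms_def mem_perms_iff)
  have "?front a \<noteq> ?back b" if "b \<in> valley_free_perms n" for a b
    using elems[OF that] by (cases b) auto
  then have disjoint: "?front ` valley_free_perms n \<inter> ?back ` valley_free_perms n = {}"
    by blast
  have inj: "inj ?front" "inj ?back"
    by (auto intro!: injI)
  have "(\<Sum>w\<in>valley_free_perms (Suc n). stat_weight p q u v s t w) =
      (\<Sum>w\<in>?front ` valley_free_perms n. stat_weight p q u v s t w) +
      (\<Sum>w\<in>?back ` valley_free_perms n. stat_weight p q u v s t w)"
    unfolding valley_free_perms_Suc[of n]
    by (intro sum.union_disjoint finite_imageI finite_valley_free_perms disjoint)
  also have "\<dots> = (\<Sum>w\<in>valley_free_perms n. stat_weight p q u v s t (?front w)) +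
      (\<Sum>w\<in>valley_free_perms n. stat_weight p q u v s t (?back w))"
    by (simp only: sum.reindex[OF inj_on_subset[OF inj(1) subset_UNIV]]
      sum.reindex[OF inj_on_subset[OF inj(2) subset_UNIV]] comp_def)
  also have "\<dots> = (\<Sum>w\<in>valley_free_perms n. p * u * s * t * stat_weight p q u v 1 t w) +
      (\<Sum>w\<in>valley_free_perms n. q * v * s * t * stat_weight p q u v s 1 w)"
    using elems
    by (simp add: stat_weight_Cons_one_map_Suc stat_weight_map_Suc_snoc_one del: One_nat_def)
  finally show ?thesis by (simp add: sum_distrib_left)
qed

definition valley_free_gf :: "'a::field \<Rightarrow> 'a \<Rightarrow> 'a \<Rightarrow> 'a \<Rightarrow> 'a \<Rightarrow> 'a \<Rightarrow> 'a fps" where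
  "valley_free_gf p q u v s t =
    Abs_fps (\<lambda>n. \<Sum>w\<in>valley_free_perms n. stat_weight p q u v s t w)"

lemma genfun_213_312_eq_valley_free_gf: "genfun [2,1,3] [3,1,2] = valley_free_gf"
  unfolding genfun_def valley_free_gf_def stat_weight_def av2_213_312_eq_valley_free_perms ..

lemma valley_free_gf_functional_equation:
  "valley_free_gf p q u v s t = 1 + fps_X * (fps_const (u * v * s * t)
    + fps_const (p * u * s * t) * (valley_free_gf p q u v 1 t - 1)
    + fps_const (q * v * s * t) * (valley_free_gf p q u v s 1 - 1))"
proof (rule fps_ext)
  fix n
  consider "n = 0" | "n = 1" | m where "n = Suc m" "0 < m"
    by (metis One_nat_def gr0I not0_implies_Suc)
  then show "fps_nth (valley_free_gf p q u v s t) n = fps_nth (1 + fps_X * (fps_const (u * v * s * t)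
    + fps_const (p * u * s * t) * (valley_free_gf p q u v 1 t - 1)
    + fps_const (q * v * s * t) * (valley_free_gf p q u v s 1 - 1))) n"
    by cases (simp_all add: valley_free_gf_def valley_free_perms_0 valley_free_perms_1
      stat_weight_Nil stat_weight_one stat_weight_sum_valley_free_perms_Suc del: One_nat_def)
qed

lemma fps_X_mult_eq_solve:
  fixes A B :: "'a::field fps"
  assumes "A = fps_X * (B + fps_const c * A)"
  shows "A = fps_X * B * inverse (1 - fps_const c * fps_X)"
proof -
  have "A * (1 - fps_const c * fps_X) = A - fps_X * (fps_const c * A)"
    by (simp add: algebra_simps)
  also have "\<dots> = fps_X * B"
    by (subst (1) assms) (simp add: algebra_simps)
  finally have "A * (1 - fps_const c * fps_X) = fps_X * B" .
  moreover have "(1 - fps_const c * fps_X) * inverse (1 - fps_const c * fps_X) = 1"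
    by (rule inverse_mult_eq_1') simp
  ultimately show ?thesis by (metis mult.assoc mult_1_right)
qed

lemma
  fixes p q u v s t :: "'a::field"
  shows valley_free_gf_1_1: "valley_free_gf p q u v 1 1 - 1 =
      fps_X * fps_const (u * v) * inverse (1 - fps_const (p * u + q * v) * fps_X)"
    and valley_free_gf_1_t: "valley_free_gf p q u v 1 t - 1 =
      fps_X * (fps_const (u * v * t) + fps_const (q * v * t) * (valley_free_gf p q u v 1 1 - 1))
      * inverse (1 - fps_const (p * u * t) * fps_X)"
    and valley_free_gf_s_1: "valley_free_gf p q u v s 1 - 1 =
      fps_X * (fps_const (u * v * s) + fps_const (p * u * s) * (valley_free_gf p q u v 1 1 - 1))
      * inverse (1 - fps_const (q * v * s) * fps_X)"
  by (rule fps_X_mult_eq_solve, subst valley_free_gf_functional_equation,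
      simp add: algebra_simps flip: fps_const_add)+

theorem theorem11:
  fixes p q u v s t :: "'a::field"
  shows "genfun [2,1,3] [3,1,2] p q u v s t =
    1 + fps_const (u*v*s*t) * fps_X
    + fps_const (p*q*s*t^2*u^2*v^2) * fps_X ^ 3
        / ((-1 + fps_const (p*t*u) * fps_X) * (-1 + fps_const (p*u) * fps_X + fps_const (q*v) * fps_X))
    + fps_const (q*s^2*t*u*v^2) * fps_X ^ 2 / (1 - fps_const (q*s*v) * fps_X)
    + fps_const (p*s*t^2*u^2*v) * fps_X ^ 2 / (1 - fps_const (p*t*u) * fps_X)
    + fps_const (p*q*s^2*t*u^2*v^2) * fps_X ^ 3
        / ((-1 + fps_const (p*u) * fps_X + fps_const (q*v) * fps_X) * (-1 + fps_const (q*s*v) * fps_X))"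
proof -
  let ?X = "fps_X :: 'a fps"
  (* Keeping the inverses opaque turns the final step into a commutative-ring identity. *)
  define R where "R c = inverse (1 - fps_const c * ?X)" for c
  then have R: "inverse (1 - fps_const c * ?X) = R c" for c
    by simp
  have divide: "f / (1 - fps_const c * ?X) = f * R c"
    "f / ((1 - fps_const c * ?X) * (1 - fps_const d * ?X)) = f * R c * R d" for f c d
    by (simp_all add: R[symmetric] fps_divide_unit fps_inverse_mult)
  have denominators:
    "(-1 + fps_const (p*t*u) * ?X) * (-1 + fps_const (p*u) * ?X + fps_const (q*v) * ?X) =
      (1 - fps_const (p*t*u) * ?X) * (1 - fps_const (p * u + q * v) * ?X)"
    "(-1 + fps_const (p*u) * ?X + fps_const (q*v) * ?X) * (-1 + fps_const (q*s*v) * ?X) =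
      (1 - fps_const (p * u + q * v) * ?X) * (1 - fps_const (q*s*v) * ?X)"
    by (simp_all add: algebra_simps flip: fps_const_add)
  (* The instances are explicit: at t = 1 the equation for F(1,t) would rewrite F(1,1) forever. *)
  show ?thesis
    unfolding genfun_213_312_eq_valley_free_gf valley_free_gf_functional_equation[of p q u v s t]
      valley_free_gf_1_t[of p q u v t] valley_free_gf_s_1[of p q u v s] valley_free_gf_1_1
      R denominators divide
    by (simp add: power2_eq_square power3_eq_cube algebra_simps
      flip: fps_const_add fps_const_mult fps_const_power)
qed

end
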